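(* Let $b>2$ and $1<n<b$ be integers, and let $p$ be an $(n,b)$-palintiple. Then $p$ is shifted-symmetric if and only if $\gcd(b-n,n^2-1)\ge n+1$.
   Context: Let $b>2$ be an integer base and write $(d_k,d_{k-1},\ldots,d_0)_b=\sum_{j=0}^k d_j b^j$ with $0\le d_j<b$. A natural number $p=(d_k,\ldots,d_0)_b$ with $d_k\neq 0$ and $d_0\neq 0$ that is not a base-$b$ palindrome is an $(n,b)$-palintiple if $(d_k,\ldots,d_0)_b=n\,(d_0,d_1,\ldots,d_k)_b$ for an integer $n$ with $1<n<b$. Its carries $c_0,\ldots,c_{k+1}$ are the carries arising in the base-$b$ multiplication of $(d_0,\ldots,d_k)_b$ by $n$: $c_0=0$ and $n d_{k-j}+c_j=d_j+b\,c_{j+1}$ for $0\le j\le k$ (so $c_{k+1}=0$). The palintiple is shifted-symmetric if $c_j=c_{k-j+1}$ for all $0\le j\le k$. *)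

theory Defs
  imports Main
begin

definition digval :: "nat \<Rightarrow> (nat \<Rightarrow> nat) \<Rightarrow> nat \<Rightarrow> nat" where
  "digval b d k = (\<Sum>j\<le>k. d j * b ^ j)"

definition is_palindrome :: "(nat \<Rightarrow> nat) \<Rightarrow> nat \<Rightarrow> bool" where
  "is_palindrome d k \<longleftrightarrow> (\<forall>j\<le>k. d j = d (k - j))"

definition palintiple :: "nat \<Rightarrow> nat \<Rightarrow> (nat \<Rightarrow> nat) \<Rightarrow> nat \<Rightarrow> bool" where
  "palintiple n b d k \<longleftrightarrow>
     1 < n \<and> n < b \<and> (\<forall>j\<le>k. d j < b) \<and> d k \<noteq> 0 \<and> d 0 \<noteq> 0 \<and>
     \<not> is_palindrome d k \<and>
     digval b d k = n * digval b (\<lambda>j. d (k - j)) k"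

text \<open>Carries of the base-b multiplication of (d 0, ..., d k)_b by n:
  c 0 = 0 and n d (k-j) + c j = d j + b c (j+1).\<close>
fun carry :: "nat \<Rightarrow> nat \<Rightarrow> (nat \<Rightarrow> nat) \<Rightarrow> nat \<Rightarrow> nat \<Rightarrow> nat" where
  "carry n b d k 0 = 0"
| "carry n b d k (Suc j) = (n * d (k - j) + carry n b d k j) div b"

definition shifted_symmetric :: "nat \<Rightarrow> nat \<Rightarrow> (nat \<Rightarrow> nat) \<Rightarrow> nat \<Rightarrow> bool" where
  "shifted_symmetric n b d k \<longleftrightarrow>
     (\<forall>j\<le>k. carry n b d k j = carry n b d k (k - j + 1))"

end

theory Submission
  imports Defs
begin

text \<open>Let c be the carries. Comparing the outermost digits of p = n * reverse(p) gives
  n d_k = d_0 + b c_1 and n d_0 + c_k = d_k; when c_k = c_1 this yields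
  (n^2 - 1) d_0 = (b - n) c_1, so n^2 - 1 = (n - 1)(n + 1) divides c_1 gcd(b - n, n^2 - 1),
  which with 0 < c_1 < n forces the gcd to be at least n + 1. Conversely, modulo
  g = gcd(b - n, n^2 - 1) we have b = n and n^2 = 1, and combining the carry
  equations at positions j and k - j shows c_{j+1} - c_{k-j} = n (c_j - c_{k+1-j}) mod g.
  Starting from c_0 = c_{k+1} = 0 this gives c_j = c_{k+1-j} mod g for all j, and as all
  carries lie below n < g, the congruences are equalities.\<close>

lemma carry_less:
  assumes "\<forall>j\<le>k. d j < b" and "0 < n"
  shows "carry n b d k j < n"
proof (induction j)
  case 0
  then show ?case using assms(2) by simp
next
  case (Suc j)
  have "d (k - j) + 1 \<le> b" using assms(1) by (simp add: Suc_le_eq)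
  then have "n * (d (k - j) + 1) \<le> n * b" by (rule mult_le_mono2)
  then have "n * d (k - j) + n \<le> n * b" by (simp add: algebra_simps)
  then have "n * d (k - j) + carry n b d k j < n * b" using Suc by linarith
  then show ?case by (simp add: less_mult_imp_div_less mult.commute)
qed

lemma mult_reversed_digits_carry:
  "n * (\<Sum>i<m. d (k - i) * b ^ i) =
   (\<Sum>i<m. ((n * d (k - i) + carry n b d k i) mod b) * b ^ i) + carry n b d k m * b ^ m"
proof (induction m)
  case 0
  then show ?case by simp
next
  case (Suc m)
  define X where "X = n * d (k - m) + carry n b d k m"
  have carry_next: "carry n b d k (Suc m) = X div b" by (simp add: X_def)
  have "X * b ^ m = (X mod b + b * (X div b)) * b ^ m" by (simp only: mod_mult_div_eq)
  also have "\<dots> = (X mod b) * b ^ m + carry n b d k (Suc m) * b ^ Suc m"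
    by (simp only: carry_next distrib_right distrib_left power_Suc ac_simps)
  finally have split: "X * b ^ m = (X mod b) * b ^ m + carry n b d k (Suc m) * b ^ Suc m" .
  have "n * (\<Sum>i<Suc m. d (k - i) * b ^ i) = n * (\<Sum>i<m. d (k - i) * b ^ i) + n * d (k - m) * b ^ m"
    by (simp add: algebra_simps)
  also have "\<dots> = (\<Sum>i<m. ((n * d (k - i) + carry n b d k i) mod b) * b ^ i) + X * b ^ m"
    using Suc by (simp add: X_def algebra_simps)
  also have "\<dots> = (\<Sum>i<m. ((n * d (k - i) + carry n b d k i) mod b) * b ^ i)
      + (X mod b) * b ^ m + carry n b d k (Suc m) * b ^ Suc m"
    by (simp only: split add.assoc)
  finally show ?case by (simp add: X_def)
qed

lemma digits_unique:
  fixes b :: nat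
  assumes "(\<Sum>i<m. x i * b ^ i) + X * b ^ m = (\<Sum>i<m. y i * b ^ i) + Y * b ^ m"
    and "\<forall>i<m. x i < b \<and> y i < b"
  shows "(\<forall>i<m. x i = y i) \<and> X = Y"
  using assms
proof (induction m arbitrary: X Y)
  case 0
  then show ?case by simp
next
  case (Suc m)
  have "(\<Sum>i<m. x i * b ^ i) + (x m + b * X) * b ^ m = (\<Sum>i<m. y i * b ^ i) + (y m + b * Y) * b ^ m"
    using Suc.prems(1) by (simp add: algebra_simps)
  from Suc.IH[OF this] Suc.prems(2) have lower: "\<forall>i<m. x i = y i" and top: "x m + b * X = y m + b * Y"
    by auto
  have "x m < b" "y m < b" using Suc.prems(2) by auto
  then have "x m = y m" using top by (metis mod_mult_self2 mod_less)
  moreover have "X = Y" using top \<open>x m = y m\<close> \<open>x m < b\<close> by simp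
  ultimately show ?case using lower less_Suc_eq by auto
qed

lemma palintiple_carry_equations:
  assumes "palintiple n b d k"
  shows "\<And>j. j \<le> k \<Longrightarrow> n * d (k - j) + carry n b d k j = d j + b * carry n b d k (Suc j)"
    and "carry n b d k (Suc k) = 0"
proof -
  let ?c = "carry n b d k"
  have digits: "\<forall>j\<le>k. d j < b" and "n < b"
    and val_eq: "digval b d k = n * digval b (\<lambda>j. d (k - j)) k"
    using assms unfolding palintiple_def by auto
  have expansion: "(\<Sum>i<Suc k. d i * b ^ i) + 0 * b ^ Suc k =
        (\<Sum>i<Suc k. ((n * d (k - i) + ?c i) mod b) * b ^ i) + ?c (Suc k) * b ^ Suc k"
    using val_eq mult_reversed_digits_carry[where m = "Suc k" and d = d and k = k and n = n and b = b]
    unfolding digval_def by (simp add: lessThan_Suc_atMost)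
  have bounded: "\<forall>i<Suc k. d i < b \<and> (n * d (k - i) + ?c i) mod b < b"
    using digits \<open>n < b\<close> by auto
  have digit: "\<forall>i<Suc k. d i = (n * d (k - i) + ?c i) mod b" and top: "0 = ?c (Suc k)"
    using digits_unique[OF expansion bounded] by (rule conjunct1, rule conjunct2)
  from top show "?c (Suc k) = 0" ..
  fix j
  assume "j \<le> k"
  then have "d j = (n * d (k - j) + ?c j) mod b" using digit le_imp_less_Suc by blast
  then show "n * d (k - j) + ?c j = d j + b * ?c (Suc j)"
    by (simp only: carry.simps(2) mod_mult_div_eq)
qed

lemma le_gcd_of_mult_eq:
  fixes a x v y :: nat
  assumes "a * x = v * y" and "0 < y"
  shows "a \<le> y * gcd v a"
proof -
  have "a dvd gcd (y * v) (y * a)" using assms(1) by (metis dvd_triv_left gcd_greatest mult.commute)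
  then have "a dvd y * gcd v a" by (simp add: gcd_mult_distrib_nat)
  then show ?thesis using assms(2) by (cases "a = 0") (simp_all add: dvd_imp_le)
qed

lemma outer_carry_equal_imp_gcd_ge:
  fixes c :: "nat \<Rightarrow> nat"
  assumes "n * d k + c 0 = d 0 + b * c 1"
    and "n * d 0 + c k = d k + b * c (Suc k)"
    and "c 0 = 0" and "c (Suc k) = 0" and "c k = c 1" and "c 1 < n"
    and "d 0 \<noteq> 0" and "1 < n" and "n \<le> b"
  shows "n + 1 \<le> gcd (b - n) (n^2 - 1)"
proof -
  have n2: "n^2 - 1 = (n - 1) * (n + 1)"
    using \<open>1 < n\<close> by (cases n) (simp_all add: power2_eq_square)
  have "int (n * (n * d 0 + c 1)) = int (d 0 + b * c 1)"
    using assms(1-5) by simp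
  then have "int (n^2 - 1) * int (d 0) = int (b - n) * int (c 1)"
    using \<open>1 < n\<close> \<open>n \<le> b\<close> by (simp add: of_nat_diff power2_eq_square algebra_simps)
  then have key: "(n^2 - 1) * d 0 = (b - n) * c 1"
    by (metis of_nat_eq_iff of_nat_mult)
  define g where "g = gcd (b - n) (n^2 - 1)"
  have "0 < n^2 - 1" using n2 \<open>1 < n\<close> by simp
  with key \<open>d 0 \<noteq> 0\<close> have "0 < c 1" by (metis mult_is_0 neq0_conv)
  with key \<open>d 0 \<noteq> 0\<close> have "(n - 1) * (n + 1) \<le> c 1 * g"
    unfolding g_def n2[symmetric] by (intro le_gcd_of_mult_eq) auto
  also have "\<dots> \<le> (n - 1) * g"
    using \<open>c 1 < n\<close> by (intro mult_le_mono1) linarith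
  finally have "n + 1 \<le> g" using \<open>1 < n\<close> by (simp only: mult_le_cancel1)
  then show ?thesis unfolding g_def .
qed

lemma carry_difference_step_dvd:
  fixes G b n x y u v w z :: "'a::comm_ring_1"
  assumes "G dvd b - n" and "G dvd n^2 - 1"
    and "n * y + u = x + b * v"
    and "n * x + w = y + b * z"
  shows "G dvd (v - w) - n * (u - z)"
proof -
  have "(v - w) - n * (u - z) = (n^2 - 1) * (y - v) - (b - n) * (z + n * v)
      - n * ((n * y + u) - (x + b * v)) - ((n * x + w) - (y + b * z))"
    by (simp add: algebra_simps power2_eq_square)
  also have "\<dots> = (n^2 - 1) * (y - v) - (b - n) * (z + n * v)"
    using assms(3,4) by simp
  finally show ?thesis using assms(1,2) by (simp add: dvd_diff dvd_mult2)
qed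

lemma carry_reflection_dvd:
  fixes c d :: "nat \<Rightarrow> nat" and G :: int
  assumes eq: "\<And>j. j \<le> k \<Longrightarrow> n * d (k - j) + c j = d j + b * c (Suc j)"
    and "c 0 = 0" and "c (Suc k) = 0"
    and "G dvd int b - int n" and "G dvd int n ^ 2 - 1"
    and "j \<le> Suc k"
  shows "G dvd int (c j) - int (c (Suc k - j))"
  using \<open>j \<le> Suc k\<close>
proof (induction j)
  case 0
  then show ?case using assms(2,3) by simp
next
  case (Suc j)
  then have "j \<le> k" by simp
  have "n * d j + c (k - j) = d (k - j) + b * c (Suc (k - j))"
    using eq[of "k - j", OF diff_le_self] by (simp only: diff_diff_cancel[OF \<open>j \<le> k\<close>])
  then have "int n * int (d j) + int (c (k - j)) = int (d (k - j)) + int b * int (c (Suc (k - j)))"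
    by (metis of_nat_add of_nat_mult)
  moreover have "int n * int (d (k - j)) + int (c j) = int (d j) + int b * int (c (Suc j))"
    using eq[OF \<open>j \<le> k\<close>] by (metis of_nat_add of_nat_mult)
  ultimately have "G dvd (int (c (Suc j)) - int (c (k - j))) - int n * (int (c j) - int (c (Suc (k - j))))"
    by (intro carry_difference_step_dvd[OF assms(4,5)])
  moreover have "G dvd int n * (int (c j) - int (c (Suc (k - j))))"
    using Suc \<open>j \<le> k\<close> by (simp add: Suc_diff_le)
  ultimately have "G dvd int (c (Suc j)) - int (c (k - j))"
    by (metis diff_add_cancel dvd_add)
  then show ?case by simp
qed

lemma gcd_ge_imp_carry_reflection:
  fixes c d :: "nat \<Rightarrow> nat"
  assumes "\<And>j. j \<le> k \<Longrightarrow> n * d (k - j) + c j = d j + b * c (Suc j)"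
    and "c 0 = 0" and "c (Suc k) = 0" and "\<And>j. c j < n"
    and "n + 1 \<le> gcd (b - n) (n^2 - 1)" and "1 \<le> n" and "n \<le> b"
    and "j \<le> Suc k"
  shows "c j = c (Suc k - j)"
proof -
  define G where "G = int (gcd (b - n) (n^2 - 1))"
  have "G dvd int (b - n)" "G dvd int (n^2 - 1)"
    unfolding G_def int_dvd_int_iff by simp_all
  then have "G dvd int b - int n" and "G dvd int n ^ 2 - 1"
    using \<open>1 \<le> n\<close> \<open>n \<le> b\<close> by (simp_all add: of_nat_diff)
  from carry_reflection_dvd[OF assms(1-3) this \<open>j \<le> Suc k\<close>]
  have dvd: "G dvd int (c j) - int (c (Suc k - j))" .
  have "\<bar>int (c j) - int (c (Suc k - j))\<bar> < G" and "0 \<le> G"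
    using assms(4)[of j] assms(4)[of "Suc k - j"] assms(5) unfolding G_def by linarith+
  with dvd_imp_le_int[OF _ dvd] have "int (c j) - int (c (Suc k - j)) = 0"
    by fastforce
  then show ?thesis by simp
qed

theorem theorem1:
  fixes b n k :: nat and d :: "nat \<Rightarrow> nat"
  assumes "b > 2" and "1 < n" and "n < b"
    and "palintiple n b d k"
  shows "shifted_symmetric n b d k \<longleftrightarrow> gcd (b - n) (n^2 - 1) \<ge> n + 1"
proof -
  let ?c = "carry n b d k"
  have eq: "\<And>j. j \<le> k \<Longrightarrow> n * d (k - j) + ?c j = d j + b * ?c (Suc j)"
    and last: "?c (Suc k) = 0"
    using palintiple_carry_equations[OF assms(4)] by blast+
  have digits: "\<forall>j\<le>k. d j < b" and "d 0 \<noteq> 0"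
    using assms(4) unfolding palintiple_def by auto
  have less: "\<And>j. ?c j < n"
    using carry_less[OF digits] \<open>1 < n\<close> by simp
  have first: "n * d k + ?c 0 = d 0 + b * ?c 1"
    using eq[of 0] by (simp only: diff_zero One_nat_def)
  have outer: "n * d 0 + ?c k = d k + b * ?c (Suc k)"
    using eq[of k] by (simp only: diff_self_eq_0)
  show ?thesis
  proof
    assume "shifted_symmetric n b d k"
    then have "?c k = ?c (k - k + 1)" unfolding shifted_symmetric_def by blast
    then have "?c k = ?c 1" by (simp only: diff_self_eq_0 add_0)
    from outer_carry_equal_imp_gcd_ge[OF first outer carry.simps(1) last this less \<open>d 0 \<noteq> 0\<close> \<open>1 < n\<close>]
    show "n + 1 \<le> gcd (b - n) (n^2 - 1)" using \<open>n < b\<close> by simp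
  next
    assume gcd: "n + 1 \<le> gcd (b - n) (n^2 - 1)"
    show "shifted_symmetric n b d k" unfolding shifted_symmetric_def
    proof (intro allI impI)
      fix j
      assume "j \<le> k"
      have "?c j = ?c (Suc k - j)"
        by (rule gcd_ge_imp_carry_reflection[OF eq carry.simps(1) last less gcd])
          (use \<open>1 < n\<close> \<open>n < b\<close> \<open>j \<le> k\<close> in simp_all)
      moreover have "Suc k - j = k - j + 1" using \<open>j \<le> k\<close> by simp
      ultimately show "?c j = ?c (k - j + 1)" by (simp only:)
    qed
  qed
qed

end
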